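(* Let $p$ be prime, $G=\mathbb{Z}_{p^2}\times\mathbb{Z}_p$, $c\in\mathbb{Z}_p$, and let $y_{ij},z_{ij}\in\mathbb{Z}_p$ ($0\le i,j\le p-1$) satisfy $y_{ij}+cz_{ij}\equiv j\pmod p$. Then the set $B=\{(i+py_{ij},z_{ij}):0\le i,j\le p-1\}\subset G$ is a tile of $G$ and also a spectral set.
   Context: Elements of $\mathbb{Z}_p$ are represented by $\{0,\dots,p-1\}$ and $i+py_{ij}$ is read in $\mathbb{Z}_{p^2}$. For $b=(b_1,b_2)\in G$ let $\chi_b(a_1,a_2)=e^{2\pi i(a_1b_1/p^2+a_2b_2/p)}$. $B$ is a spectral set if there is $\Lambda\subset G$ with $\{\chi_\lambda|_B:\lambda\in\Lambda\}$ an orthogonal basis of $L^2(B)$ (counting measure). $B$ is a tile if there is $T\subset G$ with $B\oplus T=G$ (every element of $G$ uniquely $b+t$, $b\in B,t\in T$). *)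

theory Defs
  imports Complex_Main "HOL-Computational_Algebra.Primes"
begin

definition grp :: "int \<Rightarrow> (int \<times> int) set" where
  "grp p = {0..<p^2} \<times> {0..<p}"

definition gadd :: "int \<Rightarrow> int \<times> int \<Rightarrow> int \<times> int \<Rightarrow> int \<times> int" where
  "gadd p a b = ((fst a + fst b) mod p^2, (snd a + snd b) mod p)"

definition chr :: "int \<Rightarrow> int \<times> int \<Rightarrow> int \<times> int \<Rightarrow> complex" where
  "chr p b a = exp (2 * of_real pi * \<i> *
      of_real (real_of_int (fst a * fst b) / real_of_int (p^2)
             + real_of_int (snd a * snd b) / real_of_int p))"

definition is_tile :: "int \<Rightarrow> (int \<times> int) set \<Rightarrow> bool" where
  "is_tile p B \<longleftrightarrow> (\<exists>T \<subseteq> grp p. \<forall>g \<in> grp p.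
      \<exists>!bt. fst bt \<in> B \<and> snd bt \<in> T \<and> gadd p (fst bt) (snd bt) = g)"

definition is_spectral :: "int \<Rightarrow> (int \<times> int) set \<Rightarrow> bool" where
  "is_spectral p B \<longleftrightarrow> (\<exists>\<Lambda> \<subseteq> grp p.
      (\<forall>l1 \<in> \<Lambda>. \<forall>l2 \<in> \<Lambda>. l1 \<noteq> l2 \<longrightarrow>
          (\<Sum>b\<in>B. chr p l1 b * cnj (chr p l2 b)) = 0) \<and>
      (\<forall>f :: int \<times> int \<Rightarrow> complex. \<exists>a :: int \<times> int \<Rightarrow> complex.
          \<forall>b \<in> B. f b = (\<Sum>l\<in>\<Lambda>. a l * chr p l b)))"

end

theory Submission
  imports Defs "HOL-Analysis.Complex_Transcendental"
begin

text \<open>The map psi(a1, a2) = a1 + p c a2 mod p^2 is a homomorphism from G onto Z_{p^2}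
  (the factor p makes a2 in Z_p well defined mod p^2). The congruence y_ij + c z_ij = j (mod p)
  says exactly that psi sends the element of B indexed by (i, j) to i + p j, so psi maps B
  bijectively onto Z_{p^2}. Hence B is a set of coset representatives of ker psi and tiles G
  with T = ker psi; and the characters of Z_{p^2} pulled back along psi, namely chi_(m, c m),
  restrict to B as the Fourier basis of Z_{p^2} transported by psi, hence form an orthogonal
  basis of L^2(B).\<close>

definition unity_root :: "int \<Rightarrow> int \<Rightarrow> complex" where
  "unity_root M n = exp (2 * of_real pi * \<i> * of_real (real_of_int n / real_of_int M))"

lemma unity_root_add: "unity_root M (a + b) = unity_root M a * unity_root M b"
  unfolding unity_root_def by (simp add: exp_add[symmetric] add_divide_distrib algebra_simps)

lemma unity_root_cnj: "cnj (unity_root M a) = unity_root M (- a)"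
  unfolding unity_root_def by (simp add: exp_cnj)

lemma unity_root_eq_1_iff:
  assumes "M > 0"
  shows "unity_root M d = 1 \<longleftrightarrow> M dvd d"
proof -
  have "unity_root M d = 1 \<longleftrightarrow> (\<exists>n::int. 2 * pi * (real_of_int d / real_of_int M) = of_int (2 * n) * pi)"
    unfolding unity_root_def by (simp add: exp_eq_1)
  also have "\<dots> \<longleftrightarrow> (\<exists>n::int. real_of_int d = real_of_int M * of_int n)"
    using assms by (auto simp: field_simps)
  also have "\<dots> \<longleftrightarrow> M dvd d"
    by (metis dvd_def of_int_eq_iff of_int_mult)
  finally show ?thesis .
qed

lemma unity_root_cong:
  assumes "M > 0" and "a mod M = b mod M"
  shows "unity_root M a = unity_root M b"
proof -
  have "unity_root M (a - b) = 1"
    using assms by (simp add: unity_root_eq_1_iff mod_eq_dvd_iff)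
  then show ?thesis
    using unity_root_add[of M "a - b" b] by simp
qed

lemma unity_root_power: "unity_root M (int k * d) = unity_root M d ^ k"
proof (induction k)
  case 0
  then show ?case by (simp add: unity_root_def)
next
  case (Suc k)
  have "int (Suc k) * d = d + int k * d" by (simp add: algebra_simps)
  then show ?case using Suc by (simp add: unity_root_add)
qed

lemma sum_unity_root:
  assumes M: "M > 0"
  shows "(\<Sum>n\<in>{0..<M}. unity_root M (n * d)) = (if M dvd d then of_int M else 0)"
proof -
  have "{0..<M} = int ` {..<nat M}"
    using M by (auto simp: image_iff intro!: bexI[of _ "nat x" for x])
  then have "(\<Sum>n\<in>{0..<M}. unity_root M (n * d)) = (\<Sum>k<nat M. unity_root M d ^ k)"
    by (simp add: sum.reindex unity_root_power)
  also have "\<dots> = (if M dvd d then of_int M else 0)"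
  proof (cases "M dvd d")
    case True
    then have "unity_root M d = 1" using M by (simp add: unity_root_eq_1_iff)
    then show ?thesis using M True by simp
  next
    case False
    have "unity_root M d ^ nat M = 1"
      using M unity_root_power[of M "nat M" d] unity_root_eq_1_iff[OF M, of "M * d"] by simp
    then show ?thesis using False M by (simp add: sum_gp_strict unity_root_eq_1_iff)
  qed
  finally show ?thesis .
qed

lemma unity_root_orthogonal:
  assumes "m1 \<in> {0..<M}" "m2 \<in> {0..<M}"
  shows "(\<Sum>n\<in>{0..<M}. unity_root M (m1 * n) * cnj (unity_root M (m2 * n)))
           = (if m1 = m2 then of_int M else 0)"
proof -
  have "M > 0" using assms by auto
  have "M dvd (m1 - m2) \<longleftrightarrow> m1 = m2"
    using assms by (auto simp flip: mod_eq_dvd_iff)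
  moreover have "unity_root M (m1 * n) * cnj (unity_root M (m2 * n)) = unity_root M (n * (m1 - m2))" for n
    by (simp add: unity_root_cnj flip: unity_root_add) (simp add: algebra_simps)
  ultimately show ?thesis
    using sum_unity_root[OF \<open>M > 0\<close>] by simp
qed

lemma unity_root_inversion:
  assumes "n \<in> {0..<M}"
  shows "g n = (\<Sum>m\<in>{0..<M}.
                 (\<Sum>k\<in>{0..<M}. g k * cnj (unity_root M (m * k))) / of_int M * unity_root M (m * n))"
proof -
  have "M > 0" using assms by auto
  have "(\<Sum>m\<in>{0..<M}. (\<Sum>k\<in>{0..<M}. g k * cnj (unity_root M (m * k))) / of_int M * unity_root M (m * n))
      = (\<Sum>m\<in>{0..<M}. \<Sum>k\<in>{0..<M}.
           g k / of_int M * (unity_root M (n * m) * cnj (unity_root M (k * m))))"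
    by (intro sum.cong refl) (simp add: sum_divide_distrib sum_distrib_left sum_distrib_right mult_ac)
  also have "\<dots> = (\<Sum>k\<in>{0..<M}. g k / of_int M *
           (\<Sum>m\<in>{0..<M}. unity_root M (n * m) * cnj (unity_root M (k * m))))"
    by (subst sum.swap) (simp add: sum_distrib_left)
  also have "\<dots> = (\<Sum>k\<in>{0..<M}. if k = n then g n else 0)"
    using assms \<open>M > 0\<close> by (intro sum.cong) (simp_all add: unity_root_orthogonal)
  also have "\<dots> = g n"
    using assms by simp
  finally show ?thesis by simp
qed


definition gsub :: "int \<Rightarrow> int \<times> int \<Rightarrow> int \<times> int \<Rightarrow> int \<times> int" where
  "gsub p a b = ((fst a - fst b) mod p^2, (snd a - snd b) mod p)"

lemma gsub_in_grp: "p > 0 \<Longrightarrow> gsub p a b \<in> grp p"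
  by (simp add: gsub_def grp_def)

lemma gadd_gsub: "g \<in> grp p \<Longrightarrow> gadd p b (gsub p g b) = g"
  by (auto simp: gadd_def gsub_def grp_def mod_add_right_eq)

lemma gsub_gadd: "t \<in> grp p \<Longrightarrow> gsub p (gadd p b t) b = t"
  by (auto simp: gadd_def gsub_def grp_def mod_diff_left_eq)

definition lin_hom :: "int \<Rightarrow> int \<Rightarrow> int \<times> int \<Rightarrow> int" where
  "lin_hom p c a = (fst a + p * c * snd a) mod p^2"

lemma lin_hom_range: "p > 0 \<Longrightarrow> lin_hom p c a \<in> {0..<p^2}"
  by (simp add: lin_hom_def)

lemma mult_mod_eq_mod_square:
  fixes p c x :: int
  shows "p * c * (x mod p) mod p^2 = p * c * x mod p^2"
proof -
  have "p * c * (x mod p) = c * (p * x mod p^2)"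
    by (simp add: power2_eq_square mod_mult_mult1)
  then show ?thesis
    by (metis mod_mult_right_eq mult.assoc mult.commute)
qed

lemma lin_hom_gadd: "lin_hom p c (gadd p a b) = (lin_hom p c a + lin_hom p c b) mod p^2"
proof -
  have "lin_hom p c (gadd p a b) = (fst a + fst b + p * c * (snd a + snd b)) mod p^2"
    unfolding lin_hom_def gadd_def fst_conv snd_conv
    by (rule mod_add_cong[OF mod_mod_trivial mult_mod_eq_mod_square])
  also have "\<dots> = ((fst a + p * c * snd a) + (fst b + p * c * snd b)) mod p^2"
    by (simp add: algebra_simps)
  finally show ?thesis
    by (simp add: lin_hom_def mod_add_eq)
qed

lemma lin_hom_gsub: "lin_hom p c (gsub p a b) = (lin_hom p c a - lin_hom p c b) mod p^2"
proof -
  have "lin_hom p c (gsub p a b) = (fst a - fst b + p * c * (snd a - snd b)) mod p^2"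
    unfolding lin_hom_def gsub_def fst_conv snd_conv
    by (rule mod_add_cong[OF mod_mod_trivial mult_mod_eq_mod_square])
  also have "\<dots> = ((fst a + p * c * snd a) - (fst b + p * c * snd b)) mod p^2"
    by (simp add: algebra_simps)
  finally show ?thesis
    by (simp add: lin_hom_def mod_diff_eq)
qed

lemma tile_if_bij_lin_hom:
  assumes "p > 0" and bij: "bij_betw (lin_hom p c) B {0..<p^2}"
  shows "is_tile p B"
proof -
  define K where "K = {t \<in> grp p. lin_hom p c t = 0}"
  define b where "b g = the_inv_into B (lin_hom p c) (lin_hom p c g)" for g
  have "\<exists>!bt. fst bt \<in> B \<and> snd bt \<in> K \<and> gadd p (fst bt) (snd bt) = g" if g: "g \<in> grp p" for g
  proof
    have "lin_hom p c g \<in> {0..<p^2}"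
      using \<open>p > 0\<close> by (rule lin_hom_range)
    then have b: "b g \<in> B" "lin_hom p c (b g) = lin_hom p c g"
      unfolding b_def
      by (auto intro: bij_betw_apply[OF bij_betw_the_inv_into[OF bij]] f_the_inv_into_f_bij_betw[OF bij])
    let ?bt = "(b g, gsub p g (b g))"
    show "fst ?bt \<in> B \<and> snd ?bt \<in> K \<and> gadd p (fst ?bt) (snd ?bt) = g"
      using b g \<open>p > 0\<close> by (simp add: K_def gsub_in_grp gadd_gsub lin_hom_gsub)
  next
    fix bt assume bt: "fst bt \<in> B \<and> snd bt \<in> K \<and> gadd p (fst bt) (snd bt) = g"
    then have "lin_hom p c g = lin_hom p c (fst bt)"
      using lin_hom_gadd[of p c "fst bt" "snd bt"] lin_hom_range[OF \<open>p > 0\<close>]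
      by (auto simp: K_def)
    then have "fst bt = b g"
      using bij bt by (simp add: b_def bij_betw_def the_inv_into_f_f)
    moreover have "snd bt = gsub p g (fst bt)"
      using bt gsub_gadd[of "snd bt" p "fst bt"] by (simp add: K_def)
    ultimately show "bt = (b g, gsub p g (b g))"
      by (metis prod.collapse)
  qed
  moreover have "K \<subseteq> grp p"
    by (simp add: K_def)
  ultimately show ?thesis
    unfolding is_tile_def by blast
qed

lemma chr_eq_unity_root:
  assumes "p > 0"
  shows "chr p (m, c * m mod p) a = unity_root (p^2) (m * lin_hom p c a)"
proof -
  have "chr p (m, c * m mod p) a = unity_root (p^2) (fst a * m + p * snd a * (c * m mod p))"
  proof -
    have "real_of_int (fst a * m) / real_of_int (p^2) + real_of_int (snd a * (c * m mod p)) / real_of_int p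
        = real_of_int (fst a * m + p * snd a * (c * m mod p)) / real_of_int (p^2)"
      using assms by (simp add: field_simps power2_eq_square)
    then show ?thesis
      unfolding chr_def unity_root_def by simp
  qed
  also have "\<dots> = unity_root (p^2) (m * lin_hom p c a)"
  proof (rule unity_root_cong)
    have "(fst a * m + p * snd a * (c * m mod p)) mod p^2 = (fst a * m + p * snd a * (c * m)) mod p^2"
      by (rule mod_add_cong[OF refl mult_mod_eq_mod_square])
    also have "\<dots> = m * (fst a + p * c * snd a) mod p^2"
      by (simp add: algebra_simps)
    finally show "(fst a * m + p * snd a * (c * m mod p)) mod p^2 = m * lin_hom p c a mod p^2"
      by (simp add: lin_hom_def mod_mult_right_eq)
  qed (use assms in simp)
  finally show ?thesis .
qed

lemma spectral_if_bij_lin_hom: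
  assumes "p > 0" and bij: "bij_betw (lin_hom p c) B {0..<p^2}"
  shows "is_spectral p B"
proof -
  define L where "L m = (m, c * m mod p)" for m
  define \<Lambda> where "\<Lambda> = L ` {0..<p^2}"
  have chr_L: "chr p (L m) a = unity_root (p^2) (m * lin_hom p c a)" for m a
    unfolding L_def using assms(1) by (rule chr_eq_unity_root)
  have "\<Lambda> \<subseteq> grp p"
    using assms(1) by (auto simp: \<Lambda>_def L_def grp_def)
  moreover have "(\<Sum>b\<in>B. chr p l1 b * cnj (chr p l2 b)) = 0"
    if l: "l1 \<in> \<Lambda>" "l2 \<in> \<Lambda>" and "l1 \<noteq> l2" for l1 l2
  proof -
    obtain m1 m2 where m: "l1 = L m1" "l2 = L m2" "m1 \<in> {0..<p^2}" "m2 \<in> {0..<p^2}"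
      using l unfolding \<Lambda>_def by blast
    with that have "m1 \<noteq> m2"
      by auto
    have "(\<Sum>b\<in>B. chr p l1 b * cnj (chr p l2 b))
        = (\<Sum>n\<in>{0..<p^2}. unity_root (p^2) (m1 * n) * cnj (unity_root (p^2) (m2 * n)))"
      unfolding m(1,2) chr_L
      by (rule sum.reindex_bij_betw[OF bij, where g = "\<lambda>n. unity_root (p^2) (m1 * n) * cnj (unity_root (p^2) (m2 * n))"])
    also have "\<dots> = 0"
      using m \<open>m1 \<noteq> m2\<close> by (simp add: unity_root_orthogonal)
    finally show ?thesis .
  qed
  moreover have "\<exists>a. \<forall>b\<in>B. f b = (\<Sum>l\<in>\<Lambda>. a l * chr p l b)" for f :: "int \<times> int \<Rightarrow> complex"
  proof -
    define g where "g n = f (the_inv_into B (lin_hom p c) n)" for n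
    define a where "a l = (\<Sum>k\<in>{0..<p^2}. g k * cnj (unity_root (p^2) (fst l * k))) / of_int (p^2)"
      for l :: "int \<times> int"
    have "f b = (\<Sum>l\<in>\<Lambda>. a l * chr p l b)" if "b \<in> B" for b
    proof -
      have "f b = g (lin_hom p c b)"
        using bij that by (simp add: g_def bij_betw_def the_inv_into_f_f)
      also have "\<dots> = (\<Sum>m\<in>{0..<p^2}. a (L m) * unity_root (p^2) (m * lin_hom p c b))"
        unfolding a_def L_def fst_conv
        by (rule unity_root_inversion) (use lin_hom_range[OF assms(1)] in blast)
      also have "\<dots> = (\<Sum>l\<in>\<Lambda>. a l * chr p l b)"
        unfolding \<Lambda>_def chr_L[symmetric]
        by (rule sum.reindex[symmetric, unfolded comp_def]) (simp add: inj_on_def L_def)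
      finally show ?thesis .
    qed
    then show ?thesis by blast
  qed
  ultimately show ?thesis
    unfolding is_spectral_def by blast
qed

lemma digits_bij_betw:
  fixes p :: int
  assumes "p > 0"
  shows "bij_betw (\<lambda>(i, j). int i + p * int j) ({..<nat p} \<times> {..<nat p}) {0..<p^2}"
    (is "bij_betw ?f ?I _")
proof -
  have inj: "inj_on ?f ?I"
  proof (rule inj_onI)
    fix u v
    assume u: "u \<in> ?I" and v: "v \<in> ?I" and eq: "?f u = ?f v"
    have "int (fst u) < p" "int (fst v) < p"
      using u v by auto
    moreover have "?f u mod p = ?f v mod p" "?f u div p = ?f v div p"
      using eq by simp_all
    ultimately show "u = v"
      by (simp add: split_beta prod_eq_iff)
  qed
  have sub: "?f ` ?I \<subseteq> {0..<p^2}"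
  proof
    fix n
    assume "n \<in> ?f ` ?I"
    then obtain i j where n: "n = int i + p * int j" "i < nat p" "j < nat p"
      by auto
    then have "int i + p * int j \<le> (p - 1) + p * (p - 1)"
      using assms by (intro add_mono mult_left_mono) auto
    then show "n \<in> {0..<p^2}"
      using n assms by (simp add: power2_eq_square algebra_simps)
  qed
  have "card (?f ` ?I) = card {0..<p^2}"
    using inj assms by (simp add: card_image card_cartesian_product power2_eq_square nat_mult_distrib)
  then have "?f ` ?I = {0..<p^2}"
    using sub by (intro card_subset_eq) auto
  with inj show ?thesis
    by (simp add: bij_betw_def)
qed

lemma lin_hom_digits:
  fixes p :: int
  assumes "0 \<le> i" "i < p"
  shows "lin_hom p c (i + p * y, z) = i + p * ((y + c * z) mod p)"
proof -
  define x where "x = y + c * z"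
  have "(i + p * x) mod (p * p) = p * ((i + p * x) div p mod p) + (i + p * x) mod p"
    using assms by (intro zmod_zmult2_eq) simp
  also have "\<dots> = i + p * (x mod p)"
    using assms by simp
  finally have "(i + p * x) mod p^2 = i + p * (x mod p)"
    by (simp add: power2_eq_square)
  then show ?thesis
    by (simp add: lin_hom_def x_def algebra_simps)
qed

theorem lemma5p5:
  fixes p c :: int and y z :: "nat \<Rightarrow> nat \<Rightarrow> int"
  assumes "prime p"
    and "c \<in> {0..<p}"
    and "\<And>i j. i < nat p \<Longrightarrow> j < nat p \<Longrightarrow> y i j \<in> {0..<p} \<and> z i j \<in> {0..<p}"
    and "\<And>i j. i < nat p \<Longrightarrow> j < nat p \<Longrightarrow> (y i j + c * z i j) mod p = int j mod p"
  defines "B \<equiv> {(int i + p * y i j, z i j) | i j. i < nat p \<and> j < nat p}"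
  shows "is_tile p B \<and> is_spectral p B"
proof -
  have "p > 0"
    using assms(1) by (simp add: prime_gt_0_int)
  define I where "I = {..<nat p} \<times> {..<nat p}"
  define e where "e = (\<lambda>(i, j). (int i + p * y i j, z i j))"
  have "lin_hom p c (e ij) = (\<lambda>(i, j). int i + p * int j) ij" if ij_I: "ij \<in> I" for ij
  proof -
    obtain i j where ij: "ij = (i, j)" "i < nat p" "j < nat p"
      using ij_I by (auto simp: I_def)
    have "lin_hom p c (e ij) = lin_hom p c (int i + p * y i j, z i j)"
      by (simp add: e_def ij(1))
    also have "\<dots> = int i + p * ((y i j + c * z i j) mod p)"
      using ij(2) by (intro lin_hom_digits) auto
    also have "\<dots> = int i + p * int j"
      using assms(4)[OF ij(2,3)] ij by simp
    finally show ?thesis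
      using ij by simp
  qed
  then have "bij_betw (lin_hom p c \<circ> e) I {0..<p^2}"
    using digits_bij_betw[OF \<open>p > 0\<close>] bij_betw_cong[of I "lin_hom p c \<circ> e"]
    unfolding I_def by simp
  moreover have "B = e ` I"
    unfolding B_def e_def I_def by auto
  ultimately have bij: "bij_betw (lin_hom p c) B {0..<p^2}"
    by (simp add: bij_betw_def inj_on_imageI image_comp)
  show ?thesis
    using tile_if_bij_lin_hom[OF \<open>p > 0\<close> bij] spectral_if_bij_lin_hom[OF \<open>p > 0\<close> bij] by simp
qed

end
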